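(* Assume the standing conventions of the context and suppose $\mathcal D_{Z,Z'}\neq\emptyset$. Let $\Psi'$ be a consecutive pair in $Z'_{\mathrm I}$ such that $(Z,\Lambda_{\Psi'})\in\mathcal D_{Z,Z'}$, and let $N\subset Z'_{\mathrm I}$ with $|N\cap\Psi'|=1$. Then there is no $\Lambda\in\overline{\mathcal S}_Z$ with $(\Lambda,\Lambda_N)\in\overline{\mathcal B}^+_{Z,Z'}$.
   Context: A symbol is an array $\Lambda=\binom{a'_1,\ldots,a'_{m_1}}{b'_1,\ldots,b'_{m_2}}$ of two strictly decreasing finite sequences of nonnegative integers (top row, bottom row); its defect is $\mathrm{def}(\Lambda)=m_1-m_2$. Standing assumptions: $Z=\binom{a_1,\ldots,a_{m+1}}{b_1,\ldots,b_m}$ is a special symbol of defect $1$, i.e. $a_1\ge b_1\ge a_2\ge b_2\ge\cdots\ge b_m\ge a_{m+1}$; $Z'=\binom{c_1,\ldots,c_{m'}}{d_1,\ldots,d_{m'}}$ is a special symbol of defect $0$, i.e. $c_1\ge d_1\ge c_2\ge d_2\ge\cdots\ge c_{m'}\ge d_{m'}$; and $m'\in\{m,m+1\}$. For a symbol $Y$, $Y_{\mathrm I}$ is the set of entries of $Y$ occurring in exactly one row. For $M\subset Z_{\mathrm I}$, $\Lambda_M$ is the symbol obtained from $Z$ by moving every entry of $M$ to the other row (rows re-sorted decreasingly); for $N\subset Z'_{\mathrm I}$, $\Lambda_N$ is obtained from $Z'$ in the same way. $\overline{\mathcal S}_Z=\{\Lambda_M: M\subset Z_{\mathrm I}\}$,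 $\overline{\mathcal S}_{Z'}=\{\Lambda_N:N\subset Z'_{\mathrm I}\}$; $\mathcal S_{Z,1}$ (resp. $\mathcal S_{Z',0}$) is the set of elements of $\overline{\mathcal S}_Z$ of defect $1$ (resp. of $\overline{\mathcal S}_{Z'}$ of defect $0$). A consecutive pair in $Z'_{\mathrm I}$ is a two-element subset $\{c_k,d_l\}\subset Z'_{\mathrm I}$, written $\binom{c_k}{d_l}$, with $l\in\{k-1,k\}$; a consecutive pair in $Z_{\mathrm I}$ is $\{a_k,b_l\}\subset Z_{\mathrm I}$, written $\binom{a_k}{b_l}$, with $l\in\{k-1,k\}$. Relation $\overline{\mathcal B}^+_{Z,Z'}\subset\overline{\mathcal S}_Z\times\overline{\mathcal S}_{Z'}$: for $\Lambda=\binom{a'_1,\ldots,a'_{m_1}}{b'_1,\ldots,b'_{m_2}}\in\overline{\mathcal S}_Z$ and $\Lambda'=\binom{c'_1,\ldots,c'_{m'_1}}{d'_1,\ldots,d'_{m'_2}}\in\overline{\mathcal S}_{Z'}$, $(\Lambda,\Lambda')\in\overline{\mathcal B}^+_{Z,Z'}$ iff $\mathrm{def}(\Lambda')=1-\mathrm{def}(\Lambda)$ and: if $m'=m$, $a'_i>d'_i\ge a'_{i+1}$ for $1\le i\le m'_2$ and $b'_{i-1}>c'_i\ge b'_i$ for $1\le i\le m'_1$; if $m'=m+1$, $a'_i\ge d'_i>a'_{i+1}$ for $1\le i\le m'_2$ and $b'_{i-1}\ge c'_i>b'_i$ for $1\le i\le m'_1$; here $b'_0=+\infty$ and nonexistent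 entries $a'_j,b'_j$ beyond the row lengths are $-\infty$. Then $\mathcal D_{Z,Z'}=\overline{\mathcal B}^+_{Z,Z'}\cap(\mathcal S_{Z,1}\times\mathcal S_{Z',0})$. *)

theory Defs
  imports Complex_Main "HOL-Library.Extended_Real"
begin

text \<open>A symbol is represented by the pair (set of entries of the top row,
  set of entries of the bottom row); each row is a strictly decreasing
  finite sequence, hence determined by its set of entries.\<close>

type_synonym symbol = "nat set \<times> nat set"

text \<open>The i-th entry (1-based) of a row, in decreasing order;
  index 0 gives +infinity (used only for b'_0), indices beyond the row
  length give -infinity.\<close>
definition ent :: "nat set \<Rightarrow> nat \<Rightarrow> ereal" where
  "ent A i = (if i = 0 then PInfty
              else if i \<le> card A then ereal (real (rev (sorted_list_of_set A) ! (i - 1)))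
              else MInfty)"

definition defect :: "symbol \<Rightarrow> int" where
  "defect L = int (card (fst L)) - int (card (snd L))"

definition symI :: "symbol \<Rightarrow> nat set" where
  "symI L = (fst L - snd L) \<union> (snd L - fst L)"

definition move :: "symbol \<Rightarrow> nat set \<Rightarrow> symbol" where
  "move L M = ((fst L - M) \<union> (snd L \<inter> M), (snd L - M) \<union> (fst L \<inter> M))"

definition Sbar :: "symbol \<Rightarrow> symbol set" where
  "Sbar L = {move L M | M. M \<subseteq> symI L}"

definition Sdef :: "symbol \<Rightarrow> int \<Rightarrow> symbol set" where
  "Sdef L k = {L' \<in> Sbar L. defect L' = k}"

definition mk_symbol :: "nat list \<Rightarrow> nat list \<Rightarrow> symbol" where
  "mk_symbol tp bt = (set tp, set bt)"

text \<open>Consecutive pair in Z'_I for Z' with rows c, d (0-based list indices: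
  c!k is c_{k+1}, d!l is d_{l+1}; condition l in {k-1,k}).\<close>
definition consec_pair0 :: "nat list \<Rightarrow> nat list \<Rightarrow> nat set \<Rightarrow> bool" where
  "consec_pair0 c d P \<longleftrightarrow>
     (\<exists>k < length c. \<exists>l < length d. (l + 1 = k \<or> l = k) \<and>
        P = {c ! k, d ! l} \<and> P \<subseteq> symI (mk_symbol c d))"

definition Bplus_rel :: "nat \<Rightarrow> nat \<Rightarrow> symbol \<Rightarrow> symbol \<Rightarrow> bool" where
  "Bplus_rel m m' L L' \<longleftrightarrow>
     defect L' = 1 - defect L \<and>
     (m' = m \<longrightarrow>
        (\<forall>i \<in> {1..card (snd L')}.
            ent (fst L) i > ent (snd L') i \<and> ent (snd L') i \<ge> ent (fst L) (i + 1)) \<and>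
        (\<forall>i \<in> {1..card (fst L')}.
            ent (snd L) (i - 1) > ent (fst L') i \<and> ent (fst L') i \<ge> ent (snd L) i)) \<and>
     (m' = m + 1 \<longrightarrow>
        (\<forall>i \<in> {1..card (snd L')}.
            ent (fst L) i \<ge> ent (snd L') i \<and> ent (snd L') i > ent (fst L) (i + 1)) \<and>
        (\<forall>i \<in> {1..card (fst L')}.
            ent (snd L) (i - 1) \<ge> ent (fst L') i \<and> ent (fst L') i > ent (snd L) i))"

definition Bbar_plus :: "nat \<Rightarrow> nat \<Rightarrow> symbol \<Rightarrow> symbol \<Rightarrow> (symbol \<times> symbol) set" where
  "Bbar_plus m m' Z Z' = {(L, L'). L \<in> Sbar Z \<and> L' \<in> Sbar Z' \<and> Bplus_rel m m' L L'}"

definition Dset :: "nat \<Rightarrow> nat \<Rightarrow> symbol \<Rightarrow> symbol \<Rightarrow> (symbol \<times> symbol) set" where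
  "Dset m m' Z Z' = Bbar_plus m m' Z Z' \<inter> (Sdef Z 1 \<times> Sdef Z' 0)"

end

theory Submission
  imports Defs
begin

text \<open>Let \<open>num_ge S t\<close> be the number of entries of a row \<open>S\<close> that are \<open>\<ge> t\<close>. The
  interlacing conditions of \<open>B\<^sup>+\<close> turn into inequalities between the counting functions of
  the four rows, the strict comparisons (those of the case \<open>m' = m\<close>) shifting the threshold by
  one. Write \<open>\<Psi>' = {x, y}\<close> with \<open>y < x\<close>. As \<open>Z'\<close> is special, \<open>x\<close> and \<open>y\<close> are neighbours
  in the merged sequence \<open>c\<^sub>1 \<ge> d\<^sub>1 \<ge> c\<^sub>2 \<ge> \<dots>\<close> and lie in different rows. Comparing the
  counts of \<open>Z\<close> and \<open>\<Lambda>\<^sub>\<Psi>\<^sub>'\<close> at \<open>x\<close> and \<open>y\<close>, and using that \<open>Z\<close> and \<open>Z'\<close> are special,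
  forces \<open>Z\<close> to have no entry in the window \<open>[y, x)\<close> (\<open>(y, x]\<close> if \<open>m' = m\<close>). But \<open>N\<close> moves
  exactly one of \<open>x, y\<close>, so both lie in the same row of \<open>\<Lambda>\<^sub>N\<close>, and interlacing then demands
  an entry of \<open>\<Lambda>\<close> in that window. The entries of \<open>\<Lambda>\<close> being entries of \<open>Z\<close>, there is
  no such \<open>\<Lambda>\<close>.\<close>

definition num_ge :: "nat set \<Rightarrow> nat \<Rightarrow> nat" where
  "num_ge S t = card {s \<in> S. t \<le> s}"

lemma num_ge_le_card: "finite S \<Longrightarrow> num_ge S t \<le> card S"
  unfolding num_ge_def by (intro card_mono) auto

lemma num_ge_split:
  assumes "finite S" and "lo \<le> hi"
  shows "num_ge S lo = num_ge S hi + card {s \<in> S. lo \<le> s \<and> s < hi}"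
proof -
  have "{s \<in> S. lo \<le> s} = {s \<in> S. hi \<le> s} \<union> {s \<in> S. lo \<le> s \<and> s < hi}"
    using assms(2) by auto
  then show ?thesis
    unfolding num_ge_def using assms(1) by (simp add: card_Un_disjoint disjoint_iff)
qed

lemma num_ge_antimono: "finite S \<Longrightarrow> lo \<le> hi \<Longrightarrow> num_ge S hi \<le> num_ge S lo"
  using num_ge_split by fastforce

lemma num_ge_less_iff:
  assumes "finite S" and "lo \<le> hi"
  shows "num_ge S hi < num_ge S lo \<longleftrightarrow> (\<exists>s \<in> S. lo \<le> s \<and> s < hi)"
  using num_ge_split[OF assms] assms(1) by (auto simp: card_gt_0_iff)

lemma num_ge_eq_iff:
  assumes "finite S" and "lo \<le> hi"
  shows "num_ge S lo = num_ge S hi \<longleftrightarrow> \<not> (\<exists>s \<in> S. lo \<le> s \<and> s < hi)"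
  using num_ge_split[OF assms] assms(1) by auto

lemma num_ge_Suc:
  assumes "finite S"
  shows "num_ge S s = num_ge S (Suc s) + (if s \<in> S then 1 else 0)"
proof -
  have "{x \<in> S. s \<le> x \<and> x < Suc s} = S \<inter> {s}" by auto
  then show ?thesis using num_ge_split[OF assms, of s "Suc s"] by simp
qed

lemma num_ge_insert_remove:
  assumes "finite C" and "x \<in> C" and "y \<notin> C"
  shows "num_ge (insert y (C - {x})) t + (if t \<le> x then 1 else 0)
       = num_ge C t + (if t \<le> y then 1 else 0)"
proof -
  have "{s \<in> insert y (C - {x}). t \<le> s}
      = (if t \<le> y then insert y {s \<in> C - {x}. t \<le> s} else {s \<in> C - {x}. t \<le> s})"
    by auto
  moreover have "{s \<in> C. t \<le> s}
      = (if t \<le> x then insert x {s \<in> C - {x}. t \<le> s} else {s \<in> C - {x}. t \<le> s})"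
    using assms(2) by auto
  ultimately show ?thesis
    unfolding num_ge_def using assms(1,3) by (auto simp: card_insert_if)
qed

lemma num_ge_set_conv_nth:
  "distinct xs \<Longrightarrow> num_ge (set xs) t = card {i. i < length xs \<and> t \<le> xs ! i}"
  unfolding num_ge_def
  by (subst card_image[symmetric, of "(!) xs"])
     (auto simp: inj_on_def nth_eq_iff_index_eq in_set_conv_nth intro!: arg_cong[where f = card])

lemma sorted_wrt_greater_nth_le:
  "sorted_wrt (>) xs \<Longrightarrow> i \<le> j \<Longrightarrow> j < length xs \<Longrightarrow> xs ! j \<le> (xs ! i :: nat)"
  by (metis le_less order.strict_implies_order sorted_wrt_nth_less)

lemma sorted_wrt_greater_distinct: "sorted_wrt (>) (xs :: nat list) \<Longrightarrow> distinct xs"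
  by (metis sorted_wrt_rev strict_sorted_iff distinct_rev)

lemma le_nth_iff_num_ge:
  fixes xs :: "nat list"
  assumes sorted: "sorted_wrt (>) xs" and j: "j < length xs"
  shows "t \<le> xs ! j \<longleftrightarrow> Suc j \<le> num_ge (set xs) t"
proof -
  let ?I = "{i. i < length xs \<and> t \<le> xs ! i}"
  have count: "num_ge (set xs) t = card ?I"
    using num_ge_set_conv_nth[OF sorted_wrt_greater_distinct[OF sorted]] .
  show ?thesis
  proof
    assume "t \<le> xs ! j"
    then have "{..j} \<subseteq> ?I"
      using j sorted_wrt_greater_nth_le[OF sorted] by (auto intro: order_trans)
    then show "Suc j \<le> num_ge (set xs) t"
      unfolding count using card_mono[of ?I "{..j}"] by simp
  next
    assume le: "Suc j \<le> num_ge (set xs) t"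
    show "t \<le> xs ! j"
    proof (rule ccontr)
      assume "\<not> t \<le> xs ! j"
      then have "?I \<subseteq> {..<j}"
        using sorted_wrt_greater_nth_le[OF sorted, of j] by (auto simp: not_less intro: le_trans)
      then have "card ?I \<le> j" using card_mono[of "{..<j}" ?I] by simp
      with le show False unfolding count by simp
    qed
  qed
qed

lemma ent_cases:
  obtains "ent S i = PInfty" | "ent S i = MInfty" | n where "ent S i = ereal (real n)"
  unfolding ent_def by (cases "i = 0"; cases "i \<le> card S") auto

lemma ereal_le_ent_iff:
  assumes "finite S"
  shows "ereal (real t) \<le> ent S i \<longleftrightarrow> i \<le> num_ge S t"
proof -
  let ?xs = "rev (sorted_list_of_set S)"
  have xs: "sorted_wrt (>) ?xs" "set ?xs = S" "length ?xs = card S"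
    using assms by (auto simp: sorted_wrt_rev)
  consider "i = 0" | "card S < i" | "1 \<le> i \<and> i \<le> card S" by linarith
  then show ?thesis
  proof cases
    case 3
    then have "i - 1 < length ?xs" using xs(3) by linarith
    then have "t \<le> ?xs ! (i - 1) \<longleftrightarrow> Suc (i - 1) \<le> num_ge S t"
      using le_nth_iff_num_ge[OF xs(1)] xs(2) by simp
    then show ?thesis using 3 by (simp add: ent_def)
  qed (use num_ge_le_card[OF assms, of t] in \<open>auto simp: ent_def\<close>)
qed

lemma ent_plus_one_le_of_less:
  assumes "0 < i" and "ent S i < ent T j"
  shows "ent S i + 1 \<le> ent T j"
proof (cases S i rule: ent_cases)
  case 1
  then show ?thesis using assms by (simp add: ent_def)
next
  case (3 n)
  then show ?thesis using assms(2) by (cases T j rule: ent_cases) auto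
qed simp

lemma num_ge_le_by_lower_entries:
  assumes "finite X" and "finite Y"
    and dom: "\<And>i. i \<in> {1..card Y} \<Longrightarrow> ent Y i + ereal (real e) \<le> ent X (i - k)"
  shows "num_ge Y t \<le> num_ge X (t + e) + k"
proof (cases "num_ge Y t = 0")
  case False
  let ?i = "num_ge Y t"
  have i: "?i \<in> {1..card Y}" using False num_ge_le_card[OF assms(2)] by auto
  have "ereal (real t) \<le> ent Y ?i" using ereal_le_ent_iff[OF assms(2)] by simp
  then have "ereal (real t) + ereal (real e) \<le> ent Y ?i + ereal (real e)"
    by (rule add_right_mono)
  also have "\<dots> \<le> ent X (?i - k)" using dom[OF i] .
  finally have "ereal (real (t + e)) \<le> ent X (?i - k)" by simp
  then have "?i - k \<le> num_ge X (t + e)" using ereal_le_ent_iff[OF assms(1)] by blast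
  then show ?thesis by simp
qed simp

lemma num_ge_le_by_upper_entries:
  assumes "finite X" and "finite Y" and "card Y \<le> card X + k"
    and dom: "\<And>i. i \<in> {1..card X} \<Longrightarrow> ent Y (i + k) + ereal (real e) \<le> ent X i"
  shows "num_ge Y t \<le> num_ge X (t + e) + k"
proof (cases "num_ge Y t \<le> k")
  case False
  let ?i = "num_ge Y t - k"
  have i: "?i \<in> {1..card X}" using False num_ge_le_card[OF assms(2), of t] assms(3) by auto
  have "ereal (real t) \<le> ent Y (?i + k)" using ereal_le_ent_iff[OF assms(2)] False by simp
  then have "ereal (real t) + ereal (real e) \<le> ent Y (?i + k) + ereal (real e)"
    by (rule add_right_mono)
  also have "\<dots> \<le> ent X ?i" using dom[OF i] .
  finally have "ereal (real (t + e)) \<le> ent X ?i" by simp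
  then have "?i \<le> num_ge X (t + e)" using ereal_le_ent_iff[OF assms(1)] by blast
  then show ?thesis by simp
qed simp

text \<open>The conditions of \<open>B\<^sup>+\<close> in terms of counting functions: \<open>p = 1\<close> for the strict
  inequalities of the case \<open>m' = m\<close>, \<open>p = 0\<close> for the case \<open>m' = m + 1\<close>.\<close>

definition counts_interlaced :: "nat \<Rightarrow> symbol \<Rightarrow> symbol \<Rightarrow> bool" where
  "counts_interlaced p L L' \<longleftrightarrow> (\<forall>t.
     num_ge (snd L') t \<le> num_ge (fst L) (t + p) \<and>
     num_ge (fst L') t \<le> num_ge (snd L) (t + p) + 1 \<and>
     num_ge (fst L) (t + p) \<le> num_ge (snd L') (Suc t) + 1 \<and>
     num_ge (snd L) (t + p) \<le> num_ge (fst L') (Suc t))"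

definition Bplus_shift :: "nat \<Rightarrow> nat \<Rightarrow> nat" where
  "Bplus_shift m m' = (if m' = m then 1 else 0)"

lemma Bplus_rel_counts_interlaced:
  assumes fin: "finite A" "finite B" "finite C" "finite D"
    and rel: "Bplus_rel m m' (A, B) (C, D)" and mm': "m' = m \<or> m' = m + 1"
    and card: "card A \<le> card D + 1" "card B \<le> card C"
  shows "counts_interlaced (Bplus_shift m m') (A, B) (C, D)"
  using mm'
proof
  assume eq: "m' = m"
  have hD: "ent D i < ent A i" "ent A (i + 1) \<le> ent D i" if "i \<in> {1..card D}" for i
    using rel eq that unfolding Bplus_rel_def by auto
  have hC: "ent C i < ent B (i - 1)" "ent B i \<le> ent C i" if "i \<in> {1..card C}" for i
    using rel eq that unfolding Bplus_rel_def by auto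
  have "num_ge D t \<le> num_ge A (t + 1) + 0" for t
    by (rule num_ge_le_by_lower_entries)
      (use fin hD ent_plus_one_le_of_less in \<open>auto simp: one_ereal_def\<close>)
  moreover have "num_ge C t \<le> num_ge B (t + 1) + 1" for t
    by (rule num_ge_le_by_lower_entries)
      (use fin hC ent_plus_one_le_of_less in \<open>auto simp: one_ereal_def\<close>)
  moreover have "num_ge A (t + 1) \<le> num_ge D (t + 1 + 0) + 1" for t
    by (rule num_ge_le_by_upper_entries) (use fin card hD in auto)
  moreover have "num_ge B (t + 1) \<le> num_ge C (t + 1 + 0) + 0" for t
    by (rule num_ge_le_by_upper_entries) (use fin card hC in auto)
  ultimately show ?thesis using eq unfolding counts_interlaced_def Bplus_shift_def by simp
next
  assume eq: "m' = m + 1"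
  have hD: "ent D i \<le> ent A i" "ent A (i + 1) < ent D i" if "i \<in> {1..card D}" for i
    using rel eq that unfolding Bplus_rel_def by auto
  have hC: "ent C i \<le> ent B (i - 1)" "ent B i < ent C i" if "i \<in> {1..card C}" for i
    using rel eq that unfolding Bplus_rel_def by auto
  have "num_ge D t \<le> num_ge A (t + 0) + 0" for t
    by (rule num_ge_le_by_lower_entries) (use fin hD in auto)
  moreover have "num_ge C t \<le> num_ge B (t + 0) + 1" for t
    by (rule num_ge_le_by_lower_entries) (use fin hC in auto)
  moreover have "num_ge A t \<le> num_ge D (t + 1) + 1" for t
    by (rule num_ge_le_by_upper_entries)
      (use fin card hD ent_plus_one_le_of_less in \<open>auto simp: one_ereal_def\<close>)
  moreover have "num_ge B t \<le> num_ge C (t + 1) + 0" for t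
    by (rule num_ge_le_by_upper_entries)
      (use fin card hC ent_plus_one_le_of_less in \<open>auto simp: one_ereal_def\<close>)
  ultimately show ?thesis using eq unfolding counts_interlaced_def Bplus_shift_def by simp
qed

lemma counts_interlaced_entry_between:
  assumes fin: "finite A" "finite B" "finite C" "finite D"
    and ci: "counts_interlaced p (A, B) (C, D)"
    and vu: "v < u" and same_row: "v \<in> C \<and> u \<in> C \<or> v \<in> D \<and> u \<in> D"
  shows "\<exists>z \<in> A \<union> B. v + p \<le> z \<and> z < u + p"
proof -
  from same_row show ?thesis
  proof
    assume "v \<in> C \<and> u \<in> C"
    then have "num_ge C u < num_ge C v" "num_ge C u = Suc (num_ge C (Suc u))"
      using num_ge_Suc[OF fin(3), of u] num_ge_less_iff[OF fin(3), of v u] vu by auto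
    moreover have "num_ge C v \<le> num_ge B (v + p) + 1" "num_ge B (u + p) \<le> num_ge C (Suc u)"
      using ci unfolding counts_interlaced_def by (metis fst_conv snd_conv)+
    ultimately have "num_ge B (u + p) < num_ge B (v + p)" by linarith
    then show ?thesis using num_ge_less_iff[OF fin(2)] vu by auto
  next
    assume "v \<in> D \<and> u \<in> D"
    then have "num_ge D u < num_ge D v" "num_ge D u = Suc (num_ge D (Suc u))"
      using num_ge_Suc[OF fin(4), of u] num_ge_less_iff[OF fin(4), of v u] vu by auto
    moreover have "num_ge D v \<le> num_ge A (v + p)" "num_ge A (u + p) \<le> num_ge D (Suc u) + 1"
      using ci unfolding counts_interlaced_def by (metis fst_conv snd_conv)+
    ultimately have "num_ge A (u + p) < num_ge A (v + p)" by linarith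
    then show ?thesis using num_ge_less_iff[OF fin(1)] vu by auto
  qed
qed

definition counts_special :: "symbol \<Rightarrow> bool" where
  "counts_special L \<longleftrightarrow>
     (\<forall>t. num_ge (snd L) t \<le> num_ge (fst L) t \<and> num_ge (fst L) t \<le> num_ge (snd L) t + 1)"

lemma counts_special_of_interlacing:
  fixes xs ys :: "nat list"
  assumes "sorted_wrt (>) xs" and "sorted_wrt (>) ys"
    and len: "length ys \<le> length xs" "length xs \<le> Suc (length ys)"
    and below: "\<forall>i < length ys. ys ! i \<le> xs ! i"
    and above: "\<forall>i. Suc i < length xs \<longrightarrow> xs ! Suc i \<le> ys ! i"
  shows "counts_special (set xs, set ys)"
  unfolding counts_special_def fst_conv snd_conv
proof
  fix t :: nat
  let ?I = "\<lambda>zs. {i. i < length zs \<and> t \<le> zs ! i}"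
  have count: "num_ge (set zs) t = card (?I zs)" if "sorted_wrt (>) zs" for zs
    using num_ge_set_conv_nth[OF sorted_wrt_greater_distinct[OF that]] .
  have "?I ys \<subseteq> ?I xs" using below len by (auto intro: order_trans)
  then have lower: "card (?I ys) \<le> card (?I xs)" by (intro card_mono) auto
  have "?I xs \<subseteq> insert 0 (Suc ` ?I ys)"
  proof
    fix i assume i: "i \<in> ?I xs"
    show "i \<in> insert 0 (Suc ` ?I ys)"
    proof (cases i)
      case (Suc j)
      then show ?thesis using i above len by (auto intro: order_trans)
    qed simp
  qed
  then have "card (?I xs) \<le> card (insert 0 (Suc ` ?I ys))" by (intro card_mono) auto
  also have "\<dots> \<le> card (?I ys) + 1"
    by (simp add: card_insert_if card_image)
  finally show "num_ge (set ys) t \<le> num_ge (set xs) t \<and>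
      num_ge (set xs) t \<le> num_ge (set ys) t + 1"
    using lower count assms(1,2) by simp
qed

lemma swap_top_no_entry_between:
  assumes fin: "finite A" "finite B" "finite C" "finite D"
    and special: "counts_special (A, B)" "counts_special (C, D)"
    and yx: "y < x" and x: "x \<in> C - D" and y: "y \<in> D - C"
    and adjacent: "\<forall>s \<in> C \<union> D. \<not> (y < s \<and> s < x)"
    and ci: "counts_interlaced p (A, B) (move (C, D) {x, y})"
  shows "\<not> (\<exists>z \<in> A \<union> B. y + p \<le> z \<and> z < x + p)"
proof -
  let ?C = "insert y (C - {x})" and ?D = "insert x (D - {y})"
  have "move (C, D) {x, y} = (?C, ?D)" using x y unfolding move_def by auto
  have "num_ge ?D x = num_ge D x + 1" "num_ge ?C (Suc y) + 1 = num_ge C (Suc y)"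
    using num_ge_insert_remove[OF fin(4), of y x x] num_ge_insert_remove[OF fin(3), of x y "Suc y"]
      x y yx
    by auto
  moreover have "num_ge C (Suc y) = num_ge C x" "num_ge D (Suc y) = num_ge D x"
    using adjacent yx num_ge_eq_iff[OF fin(3)] num_ge_eq_iff[OF fin(4)] by auto
  moreover have "num_ge C x = num_ge C (Suc x) + 1" "num_ge D x = num_ge D (Suc x)"
    using num_ge_Suc[OF fin(3), of x] num_ge_Suc[OF fin(4), of x] x by auto
  moreover have "num_ge ?D x \<le> num_ge A (x + p)" "num_ge B (y + p) \<le> num_ge ?C (Suc y)"
    using ci \<open>move (C, D) {x, y} = (?C, ?D)\<close> unfolding counts_interlaced_def by simp_all
  moreover have "num_ge C x \<le> num_ge D x + 1" "num_ge A (y + p) \<le> num_ge B (y + p) + 1"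
    "num_ge A (x + p) \<le> num_ge B (x + p) + 1"
    using special unfolding counts_special_def by auto
  moreover have "num_ge A (x + p) \<le> num_ge A (y + p)" "num_ge B (x + p) \<le> num_ge B (y + p)"
    using num_ge_antimono fin yx by auto
  ultimately have "num_ge A (y + p) = num_ge A (x + p)" "num_ge B (y + p) = num_ge B (x + p)"
    by linarith+
  then show ?thesis using num_ge_eq_iff fin yx by auto
qed

lemma swap_bottom_no_entry_between:
  assumes fin: "finite A" "finite B" "finite C" "finite D"
    and special: "counts_special (A, B)" "counts_special (C, D)"
    and yx: "y < x" and x: "x \<in> D - C" and y: "y \<in> C - D"
    and adjacent: "\<forall>s \<in> C \<union> D. \<not> (y < s \<and> s < x)"
    and ci: "counts_interlaced p (A, B) (move (C, D) {x, y})"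
  shows "\<not> (\<exists>z \<in> A \<union> B. y + p \<le> z \<and> z < x + p)"
proof -
  let ?C = "insert x (C - {y})" and ?D = "insert y (D - {x})"
  have "move (C, D) {x, y} = (?C, ?D)" using x y unfolding move_def by auto
  have "num_ge ?C x = num_ge C x + 1" "num_ge ?D (Suc y) + 1 = num_ge D (Suc y)"
    using num_ge_insert_remove[OF fin(3), of y x x] num_ge_insert_remove[OF fin(4), of x y "Suc y"]
      x y yx
    by auto
  moreover have "num_ge D (Suc y) = num_ge D x"
    using adjacent yx num_ge_eq_iff[OF fin(4)] by auto
  moreover have "num_ge A (y + p) \<le> num_ge ?D (Suc y) + 1" "num_ge ?C x \<le> num_ge B (x + p) + 1"
    using ci \<open>move (C, D) {x, y} = (?C, ?D)\<close> unfolding counts_interlaced_def by simp_all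
  moreover have "num_ge D x \<le> num_ge C x" "num_ge B (x + p) \<le> num_ge A (x + p)"
    "num_ge B (y + p) \<le> num_ge A (y + p)"
    using special unfolding counts_special_def by auto
  moreover have "num_ge A (x + p) \<le> num_ge A (y + p)" "num_ge B (x + p) \<le> num_ge B (y + p)"
    using num_ge_antimono fin yx by auto
  ultimately have "num_ge A (y + p) = num_ge A (x + p)" "num_ge B (y + p) = num_ge B (x + p)"
    by linarith+
  then show ?thesis using num_ge_eq_iff fin yx by auto
qed

text \<open>The merged sequence \<open>c\<^sub>1, d\<^sub>1, c\<^sub>2, d\<^sub>2, \<dots>\<close>, padded with zeros so that it is
  antitone on all of \<open>\<nat>\<close>.\<close>

definition interleave :: "nat list \<Rightarrow> nat list \<Rightarrow> nat \<Rightarrow> nat" where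
  "interleave xs ys j =
     (if j < length xs + length ys then if even j then xs ! (j div 2) else ys ! (j div 2) else 0)"

lemma interleave_antimono:
  assumes len: "length xs = n" "length ys = n"
    and special: "\<forall>i < n. xs ! i \<ge> ys ! i \<and> (i + 1 < n \<longrightarrow> ys ! i \<ge> xs ! (i + 1))"
    and "i \<le> j"
  shows "interleave xs ys j \<le> interleave xs ys i"
proof (rule lift_Suc_antimono_le[OF _ \<open>i \<le> j\<close>])
  fix h :: nat
  obtain k where "h = 2 * k \<or> h = 2 * k + 1" by (metis evenE oddE)
  then show "interleave xs ys (Suc h) \<le> interleave xs ys h"
    using special len unfolding interleave_def by auto
qed

lemma interleave_image:
  assumes "length ys = length xs"
  shows "interleave xs ys ` {..<2 * length xs} = set xs \<union> set ys"
proof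
  show "interleave xs ys ` {..<2 * length xs} \<subseteq> set xs \<union> set ys"
    using assms by (auto simp: interleave_def)
  have "xs ! k = interleave xs ys (2 * k)" "ys ! k = interleave xs ys (2 * k + 1)" if "k < length xs" for k
    using that assms by (auto simp: interleave_def)
  then show "set xs \<union> set ys \<subseteq> interleave xs ys ` {..<2 * length xs}"
    using assms by (fastforce simp: in_set_conv_nth)
qed

lemma consec_pair0_interleave:
  assumes "length d = length c" and "consec_pair0 c d Psi"
  obtains j where "Psi = {interleave c d j, interleave c d (Suc j)}"
proof -
  obtain k l where k: "k < length c" and l: "l < length d" and "l + 1 = k \<or> l = k"
    and Psi: "Psi = {c ! k, d ! l}"
    using assms(2) unfolding consec_pair0_def by blast
  then consider "k = Suc l" | "l = k" by auto
  then show thesis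
  proof cases
    case 1
    then show thesis
      using that[of "2 * l + 1"] k assms(1) Psi by (auto simp: interleave_def)
  next
    case 2
    then show thesis
      using that[of "2 * k"] k assms(1) Psi by (auto simp: interleave_def)
  qed
qed

lemma consec_pair0_adjacent:
  assumes len: "length c = n" "length d = n"
    and special: "\<forall>i < n. c ! i \<ge> d ! i \<and> (i + 1 < n \<longrightarrow> d ! i \<ge> c ! (i + 1))"
    and Psi: "consec_pair0 c d Psi"
  obtains x y where "y < x" and "Psi = {x, y}"
    and "x \<in> set c - set d \<and> y \<in> set d - set c \<or> x \<in> set d - set c \<and> y \<in> set c - set d"
    and "\<forall>s \<in> set c \<union> set d. \<not> (y < s \<and> s < x)"
proof -
  let ?w = "interleave c d"
  obtain u v where uv: "Psi = {u, v}" "u \<in> set c - set d" "v \<in> set d - set c"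
    using Psi unfolding consec_pair0_def symI_def mk_symbol_def by fastforce
  obtain j where j: "Psi = {?w j, ?w (Suc j)}"
    using consec_pair0_interleave[of d c] len Psi by auto
  have orient: "u = ?w j \<and> v = ?w (Suc j) \<or> u = ?w (Suc j) \<and> v = ?w j"
    using j uv(1) by (simp add: doubleton_eq_iff)
  moreover have "u \<noteq> v" using uv by auto
  ultimately have "?w (Suc j) \<noteq> ?w j" by auto
  then have less: "?w (Suc j) < ?w j"
    using interleave_antimono[OF len special, of j "Suc j"] by simp
  have between: "\<not> (?w (Suc j) < ?w i \<and> ?w i < ?w j)" for i
    using interleave_antimono[OF len special, of i j] interleave_antimono[OF len special, of "Suc j" i]
    by (cases "i \<le> j") auto
  show thesis
  proof (rule that)
    show "?w (Suc j) < ?w j" by (rule less)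
    show "Psi = {?w j, ?w (Suc j)}" by (rule j)
    show "?w j \<in> set c - set d \<and> ?w (Suc j) \<in> set d - set c
        \<or> ?w j \<in> set d - set c \<and> ?w (Suc j) \<in> set c - set d"
      using orient uv by auto
    show "\<forall>s \<in> set c \<union> set d. \<not> (?w (Suc j) < s \<and> s < ?w j)"
      using between interleave_image[of d c, symmetric] len by auto
  qed
qed

lemma move_empty [simp]: "move L {} = L"
  by (simp add: move_def)

lemma move_rows_subset: "fst (move L M) \<union> snd (move L M) \<subseteq> fst L \<union> snd L"
  by (auto simp: move_def)

lemma card_move:
  assumes "finite (fst L)" and "finite (snd L)"
  shows "card (fst (move L M)) + card (snd (move L M)) = card (fst L) + card (snd L)"
proof -
  have "card (fst (move L M)) = card (fst L - M) + card (snd L \<inter> M)"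
    "card (snd (move L M)) = card (snd L - M) + card (fst L \<inter> M)"
    unfolding move_def using assms by (auto intro!: card_Un_disjoint)
  then show ?thesis using card_Int_Diff[OF assms(1), of M] card_Int_Diff[OF assms(2), of M] by simp
qed

lemma defect_complement_card_bounds:
  assumes "card A + card B = 2 * m + 1" and "card C + card D = 2 * m'" and "m \<le> m'"
    and "defect (C, D) = 1 - defect (A, B)"
  shows "card A \<le> card D + 1" and "card B \<le> card C"
  using assms unfolding defect_def by simp_all

lemma move_one_of_pair_same_row:
  assumes pair: "x \<in> C - D \<and> y \<in> D - C \<or> x \<in> D - C \<and> y \<in> C - D"
    and one: "card (N \<inter> {x, y}) = 1"
  shows "x \<in> fst (move (C, D) N) \<and> y \<in> fst (move (C, D) N)
       \<or> x \<in> snd (move (C, D) N) \<and> y \<in> snd (move (C, D) N)"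
proof -
  have "x \<noteq> y" using pair by auto
  then have "x \<in> N \<longleftrightarrow> y \<notin> N"
    using one by (cases "x \<in> N"; cases "y \<in> N") (auto simp: Int_insert_left)
  then show ?thesis using pair unfolding move_def by auto
qed

context
  fixes m m' :: nat and A B C D :: "nat set"
  assumes fin: "finite A" "finite B" "finite C" "finite D"
    and cards: "card A + card B = 2 * m + 1" "card C + card D = 2 * m'"
    and mm': "m' = m \<or> m' = m + 1"
begin

lemma Bplus_rel_move_counts_interlaced:
  assumes rel: "Bplus_rel m m' (move (A, B) M) (move (C, D) N)"
  shows "counts_interlaced (Bplus_shift m m') (move (A, B) M) (move (C, D) N)"
proof -
  obtain A' B' C' D' where L: "move (A, B) M = (A', B')" and L': "move (C, D) N = (C', D')"
    by fastforce
  have fin': "finite A'" "finite B'" "finite C'" "finite D'"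
    using L L' fin unfolding move_def by auto
  have "card A' + card B' = 2 * m + 1" "card C' + card D' = 2 * m'"
    using card_move[of "(A, B)" M] card_move[of "(C, D)" N] L L' fin cards by simp_all
  moreover have "m \<le> m'" using mm' by auto
  moreover have "defect (C', D') = 1 - defect (A', B')"
    using rel L L' unfolding Bplus_rel_def by simp
  ultimately have "card A' \<le> card D' + 1" "card B' \<le> card C'"
    by (rule defect_complement_card_bounds)+
  then show ?thesis
    using Bplus_rel_counts_interlaced[OF fin'] rel mm' L L' by simp
qed

lemma Bplus_rel_swap_no_entry_between:
  assumes special: "counts_special (A, B)" "counts_special (C, D)"
    and yx: "y < x" and pair: "x \<in> C - D \<and> y \<in> D - C \<or> x \<in> D - C \<and> y \<in> C - D"
    and adjacent: "\<forall>s \<in> C \<union> D. \<not> (y < s \<and> s < x)"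
    and rel: "Bplus_rel m m' (A, B) (move (C, D) {x, y})"
  shows "\<not> (\<exists>z \<in> A \<union> B. y + Bplus_shift m m' \<le> z \<and> z < x + Bplus_shift m m')"
proof -
  have "counts_interlaced (Bplus_shift m m') (A, B) (move (C, D) {x, y})"
    using Bplus_rel_move_counts_interlaced[of "{}"] rel by simp
  then show ?thesis
    using pair swap_top_no_entry_between[OF fin special yx _ _ adjacent]
      swap_bottom_no_entry_between[OF fin special yx _ _ adjacent] by blast
qed

lemma Bplus_rel_move_entry_between:
  assumes yx: "y < x" and pair: "x \<in> C - D \<and> y \<in> D - C \<or> x \<in> D - C \<and> y \<in> C - D"
    and one: "card (N \<inter> {x, y}) = 1"
    and rel: "Bplus_rel m m' (move (A, B) M) (move (C, D) N)"
  shows "\<exists>z \<in> A \<union> B. y + Bplus_shift m m' \<le> z \<and> z < x + Bplus_shift m m'"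
proof -
  obtain A' B' C' D' where L: "move (A, B) M = (A', B')" and L': "move (C, D) N = (C', D')"
    by fastforce
  have fin': "finite A'" "finite B'" "finite C'" "finite D'"
    using L L' fin unfolding move_def by auto
  have "counts_interlaced (Bplus_shift m m') (A', B') (C', D')"
    using Bplus_rel_move_counts_interlaced[OF rel] L L' by simp
  moreover have "y \<in> C' \<and> x \<in> C' \<or> y \<in> D' \<and> x \<in> D'"
    using move_one_of_pair_same_row[OF pair one] L' by auto
  ultimately obtain z where "z \<in> A' \<union> B'" "y + Bplus_shift m m' \<le> z" "z < x + Bplus_shift m m'"
    using counts_interlaced_entry_between[OF fin'] yx by blast
  moreover have "A' \<union> B' \<subseteq> A \<union> B" using move_rows_subset[of "(A, B)" M] L by simp
  ultimately show ?thesis by blast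
qed

end

theorem lemma0809:
  fixes a b c d :: "nat list" and m m' :: nat and Psi N :: "nat set"
  assumes la: "length a = m + 1" and lb: "length b = m"
    and sa: "sorted_wrt (>) a" and sb: "sorted_wrt (>) b"
    and Zspecial: "\<forall>i < m. a ! i \<ge> b ! i \<and> b ! i \<ge> a ! (i + 1)"
    and lc: "length c = m'" and ld: "length d = m'"
    and sc: "sorted_wrt (>) c" and sd: "sorted_wrt (>) d"
    and Z'special: "\<forall>i < m'. c ! i \<ge> d ! i \<and> (i + 1 < m' \<longrightarrow> d ! i \<ge> c ! (i + 1))"
    and mm': "m' = m \<or> m' = m + 1"
    and Dne: "Dset m m' (mk_symbol a b) (mk_symbol c d) \<noteq> {}"
    and Psi: "consec_pair0 c d Psi"
    and ZPsi: "(mk_symbol a b, move (mk_symbol c d) Psi) \<in> Dset m m' (mk_symbol a b) (mk_symbol c d)"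
    and N: "N \<subseteq> symI (mk_symbol c d)"
    and NPsi: "card (N \<inter> Psi) = 1"
  shows "\<not> (\<exists>L \<in> Sbar (mk_symbol a b).
            (L, move (mk_symbol c d) N) \<in> Bbar_plus m m' (mk_symbol a b) (mk_symbol c d))"
proof
  define A B C D where "A = set a" "B = set b" "C = set c" "D = set d"
  assume "\<exists>L \<in> Sbar (mk_symbol a b).
            (L, move (mk_symbol c d) N) \<in> Bbar_plus m m' (mk_symbol a b) (mk_symbol c d)"
  then obtain M where rel: "Bplus_rel m m' (move (A, B) M) (move (C, D) N)"
    unfolding Bbar_plus_def Sbar_def A_B_C_D_def mk_symbol_def by auto
  have fin: "finite A" "finite B" "finite C" "finite D" unfolding A_B_C_D_def by simp_all
  have cards: "card A + card B = 2 * m + 1" "card C + card D = 2 * m'"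
    using la lb lc ld sorted_wrt_greater_distinct[OF sa] sorted_wrt_greater_distinct[OF sb]
      sorted_wrt_greater_distinct[OF sc] sorted_wrt_greater_distinct[OF sd]
    unfolding A_B_C_D_def by (simp_all add: distinct_card)
  have special: "counts_special (A, B)" "counts_special (C, D)"
    unfolding A_B_C_D_def using la lb lc ld Zspecial Z'special
    by (auto intro!: counts_special_of_interlacing sa sb sc sd)
  obtain x y where yx: "y < x" and Psi_xy: "Psi = {x, y}"
    and pair: "x \<in> C - D \<and> y \<in> D - C \<or> x \<in> D - C \<and> y \<in> C - D"
    and adjacent: "\<forall>s \<in> C \<union> D. \<not> (y < s \<and> s < x)"
    using consec_pair0_adjacent[OF lc ld Z'special Psi] unfolding A_B_C_D_def by blast
  have "Bplus_rel m m' (A, B) (move (C, D) {x, y})"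
    using ZPsi Psi_xy unfolding Dset_def Bbar_plus_def A_B_C_D_def mk_symbol_def by simp
  then have "\<not> (\<exists>z \<in> A \<union> B. y + Bplus_shift m m' \<le> z \<and> z < x + Bplus_shift m m')"
    using Bplus_rel_swap_no_entry_between[OF fin cards mm' special yx pair adjacent] by blast
  moreover have "\<exists>z \<in> A \<union> B. y + Bplus_shift m m' \<le> z \<and> z < x + Bplus_shift m m'"
    using Bplus_rel_move_entry_between[OF fin cards mm' yx pair _ rel] NPsi Psi_xy by simp
  ultimately show False by blast
qed

end
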